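(* Let $A=\{0,1,2\}$ and let $T\colon A^4\to A$ be given by $T(1,1,2,2)=T(1,2,1,2)=1$ and $T(\mathbf{x})=0$ for all other $\mathbf{x}\in A^4$. Then \[\langle\{T\}\rangle^{(2)}=\{e^2_1,e^2_2,c^2_0,\delta_{(1,2)},\delta_{(2,1)}\},\] where $e^2_1(x,y)=x$, $e^2_2(x,y)=y$, $c^2_0$ is the binary constant zero function, and for $\mathbf{a}\in A^2$, $\delta_{\mathbf{a}}(\mathbf{x})=1$ if $\mathbf{x}=\mathbf{a}$ and $\delta_{\mathbf{a}}(\mathbf{x})=0$ otherwise.
   Context: $\langle\{T\}\rangle$ denotes the clone generated by $T$ (all term operations of positive arity of $(A;T)$, including projections), and $\langle\{T\}\rangle^{(2)}$ its binary members. *)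

theory Defs
  imports Main "HOL-Library.Numeral_Type"
begin

text \<open>The base set A = {0,1,2} is the three-element type 3 (elements 0, 1, 2).
An n-ary operation on A is represented as a function (nat => 3) => 3 that
reads only the arguments 0..n-1.\<close>

definition T :: "3 \<Rightarrow> 3 \<Rightarrow> 3 \<Rightarrow> 3 \<Rightarrow> 3" where
  "T x1 x2 x3 x4 =
     (if (x1, x2, x3, x4) = (1, 1, 2, 2) \<or> (x1, x2, x3, x4) = (1, 2, 1, 2) then 1 else 0)"

inductive_set termops :: "nat \<Rightarrow> ((nat \<Rightarrow> 3) \<Rightarrow> 3) set" for n :: nat where
  proj: "i < n \<Longrightarrow> (\<lambda>x. x i) \<in> termops n"
| comp: "\<lbrakk>f1 \<in> termops n; f2 \<in> termops n; f3 \<in> termops n; f4 \<in> termops n\<rbrakk>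
         \<Longrightarrow> (\<lambda>x. T (f1 x) (f2 x) (f3 x) (f4 x)) \<in> termops n"

definition cloneT :: "(nat \<times> ((nat \<Rightarrow> 3) \<Rightarrow> 3)) set" where
  "cloneT = {(n, f). 1 \<le> n \<and> f \<in> termops n}"

definition cloneT2 :: "(3 \<Rightarrow> 3 \<Rightarrow> 3) set" where
  "cloneT2 = {(\<lambda>x y. f (\<lambda>i. if i = 0 then x else y)) | f. (2, f) \<in> cloneT}"

definition e21 :: "3 \<Rightarrow> 3 \<Rightarrow> 3" where "e21 x y = x"
definition e22 :: "3 \<Rightarrow> 3 \<Rightarrow> 3" where "e22 x y = y"
definition c20 :: "3 \<Rightarrow> 3 \<Rightarrow> 3" where "c20 x y = 0"
definition delta2 :: "3 \<times> 3 \<Rightarrow> 3 \<Rightarrow> 3 \<Rightarrow> 3" where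
  "delta2 a x y = (if (x, y) = a then 1 else 0)"

end

theory Submission
  imports Defs
begin

text \<open>The five operations are closed under composition with T. A composite
T(a,b,c,d) only takes the values 0 and 1, and it can take the value 1 only where
a = 1 and d = 2. For any two of the five operations, the points where the first
equals 1 and the second equals 2 lie in {(1,2)} or in {(2,1)}, so the composite
is c0 or one of the two deltas. Conversely, T(x,x,y,y) = delta(1,2),
T(y,y,x,x) = delta(2,1) and T(x,x,x,x) = c0.\<close>

definition binops_T :: "(3 \<Rightarrow> 3 \<Rightarrow> 3) set" where
  "binops_T = {e21, e22, c20, delta2 (1, 2), delta2 (2, 1)}"

definition binop_of :: "((nat \<Rightarrow> 3) \<Rightarrow> 3) \<Rightarrow> 3 \<Rightarrow> 3 \<Rightarrow> 3" where
  "binop_of f = (\<lambda>x y. f (\<lambda>i. if i = 0 then x else y))"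

lemma cloneT2_eq_image_binop_of: "cloneT2 = binop_of ` termops 2"
  by (auto simp: cloneT2_def cloneT_def binop_of_def)

lemma forall_3_iff: "(\<forall>x::3. P x) \<longleftrightarrow> P 0 \<and> P 1 \<and> P 2"
proof -
  have "(x::3) = 0 \<or> x = 1 \<or> x = 2" for x
  proof (induct x)
    case (of_int z)
    then have "z = 0 \<or> z = 1 \<or> z = 2" by auto
    then show ?case by auto
  qed
  then show ?thesis by metis
qed

lemma T_eq_1_imp: "T a b c d = 1 \<Longrightarrow> a = 1 \<and> d = 2"
  by (auto simp: T_def split: if_splits)

lemma T_eq_0_or_1: "T a b c d = 0 \<or> T a b c d = 1"
  by (simp add: T_def)

lemma zero_one_valued_supported_on_point:
  fixes h :: "3 \<Rightarrow> 3 \<Rightarrow> 3"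
  assumes zero_one: "\<And>x y. h x y = 0 \<or> h x y = 1"
    and support: "\<And>x y. h x y = 1 \<Longrightarrow> (x, y) = p"
  shows "h = c20 \<or> h = delta2 p"
proof -
  have off_p: "h x y = 0" if "(x, y) \<noteq> p" for x y
    using zero_one support that by blast
  show ?thesis
  proof (cases "h (fst p) (snd p) = 1")
    case True
    then have "h x y = delta2 p x y" for x y
      using off_p by (cases "(x, y) = p") (auto simp: delta2_def)
    then show ?thesis by blast
  next
    case False
    then have "h x y = c20 x y" for x y
      using zero_one[of x y] off_p[of x y] by (cases "(x, y) = p") (auto simp: c20_def)
    then show ?thesis by blast
  qed
qed

lemma binops_T_one_two_locus:
  assumes "a \<in> binops_T" and "d \<in> binops_T"
  obtains p where "p \<in> {(1, 2), (2, 1)}" and "\<And>x y. a x y = 1 \<Longrightarrow> d x y = 2 \<Longrightarrow> (x, y) = p"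
proof -
  have "(\<forall>x y. a x y = 1 \<and> d x y = 2 \<longrightarrow> (x, y) = (1, 2))
    \<or> (\<forall>x y. a x y = 1 \<and> d x y = 2 \<longrightarrow> (x, y) = (2, 1))"
    using assms unfolding binops_T_def insert_iff empty_iff
    by (elim disjE) (simp_all add: forall_3_iff e21_def e22_def c20_def delta2_def)
  then show ?thesis using that by blast
qed

lemma binops_T_closed_T:
  assumes "a \<in> binops_T" "b \<in> binops_T" "c \<in> binops_T" "d \<in> binops_T"
  shows "(\<lambda>x y. T (a x y) (b x y) (c x y) (d x y)) \<in> binops_T"
proof -
  obtain p where p: "p \<in> {(1, 2), (2, 1)}"
    and locus: "\<And>x y. a x y = 1 \<Longrightarrow> d x y = 2 \<Longrightarrow> (x, y) = p"
    using binops_T_one_two_locus[OF assms(1,4)] by blast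
  have "(\<lambda>x y. T (a x y) (b x y) (c x y) (d x y)) = c20
    \<or> (\<lambda>x y. T (a x y) (b x y) (c x y) (d x y)) = delta2 p"
    by (rule zero_one_valued_supported_on_point) (use T_eq_0_or_1 T_eq_1_imp locus in blast)+
  then show ?thesis using p by (auto simp: binops_T_def)
qed

lemma binop_of_termops_2: "f \<in> termops 2 \<Longrightarrow> binop_of f \<in> binops_T"
proof (induction rule: termops.induct)
  case (proj i)
  then have "i = 0 \<or> i = 1" by auto
  then show ?case
    by (auto simp: binop_of_def binops_T_def e21_def e22_def fun_eq_iff)
next
  case (comp f1 f2 f3 f4)
  then show ?case
    using binops_T_closed_T[of "binop_of f1" "binop_of f2" "binop_of f3" "binop_of f4"]
    by (simp add: binop_of_def)
qed

lemma binops_T_subset_binop_of_termops: "binops_T \<subseteq> binop_of ` termops 2"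
proof -
  have x: "(\<lambda>x. x 0) \<in> termops 2" and y: "(\<lambda>x. x 1) \<in> termops 2"
    by (simp_all add: termops.proj)
  have "e21 \<in> binop_of ` termops 2"
    by (rule image_eqI[OF _ x]) (simp add: fun_eq_iff binop_of_def e21_def)
  moreover have "e22 \<in> binop_of ` termops 2"
    by (rule image_eqI[OF _ y]) (simp add: fun_eq_iff binop_of_def e22_def)
  moreover have "c20 \<in> binop_of ` termops 2"
    by (rule image_eqI[OF _ termops.comp[OF x x x x]])
      (simp add: fun_eq_iff binop_of_def T_def c20_def)
  moreover have "delta2 (1, 2) \<in> binop_of ` termops 2"
    by (rule image_eqI[OF _ termops.comp[OF x x y y]])
      (simp add: fun_eq_iff binop_of_def T_def delta2_def)
  moreover have "delta2 (2, 1) \<in> binop_of ` termops 2"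
    by (rule image_eqI[OF _ termops.comp[OF y y x x]])
      (simp add: fun_eq_iff binop_of_def T_def delta2_def)
  ultimately show ?thesis
    by (simp add: binops_T_def)
qed

theorem lemma3p8:
  shows "cloneT2 = {e21, e22, c20, delta2 (1, 2), delta2 (2, 1)}"
proof -
  have "binop_of ` termops 2 \<subseteq> binops_T"
    using binop_of_termops_2 by blast
  then show ?thesis
    using binops_T_subset_binop_of_termops
    unfolding cloneT2_eq_image_binop_of binops_T_def[symmetric] by blast
qed

end
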